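(* Let $K_1,K_2:\mathbb R\to(0,\infty)$ and $a:\mathbb R^2\to(0,\infty)$ be positive, bounded, smooth, and let $d\ge0$ be a constant. Consider $$\begin{aligned}\dot x_1&=x_1\Big[r_1\Big(1-\frac{x_1}{K_1(u_1)}\Big)-\frac{a(u_1,u_2)x_2}{1+ha(u_1,u_2)x_1}\Big],\\ \dot x_2&=x_2\Big[\frac{ea(u_1,u_2)x_1}{1+ha(u_1,u_2)x_1}-d+r_2\Big(1-\frac{x_2}{K_2(u_2)}\Big)\Big],\\ \dot u_1&=\sigma_1^2\Big[\frac{r_1x_1K_1'(u_1)}{K_1(u_1)^2}-\frac{x_2a_{u_1}(u_1,u_2)}{(1+ha(u_1,u_2)x_1)^2}\Big],\\ \dot u_2&=\sigma_2^2\Big[\frac{ex_1a_{u_2}(u_1,u_2)}{(1+ha(u_1,u_2)x_1)^2}+\frac{r_2x_2K_2'(u_2)}{K_2(u_2)^2}\Big],\end{aligned}$$ with constants $r_1,r_2,h,e,\sigma_1,\sigma_2>0$. (i) The host-only equilibrium $(K_1(u_1^* ),0,u_1^*,u_2^* )$ exists if $K_1'(u_1^* )=a_{u_2}(u_1^*,u_2^* )=0$, and it is locally asymptotically stable if $0<\frac{ea(u_1^*,u_2^* )K_1(u_1^* )}{1+ha(u_1^*,u_2^* )K_1(u_1^* )}<d-r_2$, $K_1''(u_1^* )<0$ and $a_{u_2u_2}(u_1^*,u_2^* )<0$. (ii) If $d<r_2$, the parasite-only equilibrium $\big(0,K_2(u_2^* )(1-\frac{d}{r_2}),u_1^*,u_2^*\big)$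 exists if $K_2'(u_2^* )=a_{u_1}(u_1^*,u_2^* )=0$, and it is locally asymptotically stable if $\frac{r_1}{a(u_1^*,u_2^* )}<K_2(u_2^* )(1-\frac{d}{r_2})$, $a_{u_1u_1}(u_1^*,u_2^* )>0$ and $K_2''(u_2^* )<0$.
   Context: Co-evolutionary host–parasite model with trait-independent parasite death rate $d$; $x_1,x_2$ host and parasite densities, $u_1,u_2$ mean traits, subscripts on $a$ denote partial derivatives. *)

theory Defs
  imports "HOL-Analysis.Analysis"
begin

definition pd1 :: "(real \<Rightarrow> real \<Rightarrow> real) \<Rightarrow> real \<Rightarrow> real \<Rightarrow> real" where
  "pd1 g x y = deriv (\<lambda>s. g s y) x"

definition pd2 :: "(real \<Rightarrow> real \<Rightarrow> real) \<Rightarrow> real \<Rightarrow> real \<Rightarrow> real" where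
  "pd2 g x y = deriv (\<lambda>s. g x s) y"

definition smooth1 :: "(real \<Rightarrow> real) \<Rightarrow> bool" where
  "smooth1 f \<longleftrightarrow> (\<forall>n x. ((deriv ^^ n) f) differentiable (at x))"

definition iter_pd :: "bool list \<Rightarrow> (real \<Rightarrow> real \<Rightarrow> real) \<Rightarrow> (real \<Rightarrow> real \<Rightarrow> real)" where
  "iter_pd ds g = foldr (\<lambda>b h. if b then pd1 h else pd2 h) ds g"

definition smooth2 :: "(real \<Rightarrow> real \<Rightarrow> real) \<Rightarrow> bool" where
  "smooth2 g \<longleftrightarrow> (\<forall>ds p. (\<lambda>(x::real, y::real). iter_pd ds g x y) differentiable (at p))"

type_synonym state = "real \<times> real \<times> real \<times> real"

definition hp_field ::
  "real \<Rightarrow> real \<Rightarrow> real \<Rightarrow> real \<Rightarrow> real \<Rightarrow> real \<Rightarrow> real \<Rightarrow>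
   (real \<Rightarrow> real) \<Rightarrow> (real \<Rightarrow> real) \<Rightarrow> (real \<Rightarrow> real \<Rightarrow> real) \<Rightarrow> state \<Rightarrow> state" where
  "hp_field r1 r2 h e d s1 s2 K1 K2 a = (\<lambda>(x1, x2, u1, u2).
     (x1 * (r1 * (1 - x1 / K1 u1) - a u1 u2 * x2 / (1 + h * a u1 u2 * x1)),
      x2 * (e * a u1 u2 * x1 / (1 + h * a u1 u2 * x1) - d + r2 * (1 - x2 / K2 u2)),
      s1\<^sup>2 * (r1 * x1 * deriv K1 u1 / (K1 u1)\<^sup>2 - x2 * pd1 a u1 u2 / (1 + h * a u1 u2 * x1)\<^sup>2),
      s2\<^sup>2 * (e * x1 * pd2 a u1 u2 / (1 + h * a u1 u2 * x1)\<^sup>2 + r2 * x2 * deriv K2 u2 / (K2 u2)\<^sup>2)))"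

definition is_equilibrium :: "('a::real_normed_vector \<Rightarrow> 'a) \<Rightarrow> 'a \<Rightarrow> bool" where
  "is_equilibrium f p \<longleftrightarrow> f p = 0"

definition solution_on :: "('a::real_normed_vector \<Rightarrow> 'a) \<Rightarrow> real \<Rightarrow> (real \<Rightarrow> 'a) \<Rightarrow> bool" where
  "solution_on f T x \<longleftrightarrow>
     (\<forall>t\<in>{0..T}. (x has_vector_derivative f (x t)) (at t within {0..T}))"

definition global_solution :: "('a::real_normed_vector \<Rightarrow> 'a) \<Rightarrow> (real \<Rightarrow> 'a) \<Rightarrow> bool" where
  "global_solution f x \<longleftrightarrow>
     (\<forall>t\<ge>0. (x has_vector_derivative f (x t)) (at t within {0..}))"

definition loc_asymp_stable :: "('a::real_normed_vector \<Rightarrow> 'a) \<Rightarrow> 'a \<Rightarrow> bool" where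
  "loc_asymp_stable f p \<longleftrightarrow>
     is_equilibrium f p \<and>
     (\<forall>\<epsilon>>0. \<exists>\<delta>>0. \<forall>x T. 0 \<le> T \<longrightarrow> solution_on f T x \<longrightarrow> dist (x 0) p < \<delta> \<longrightarrow>
          (\<forall>t\<in>{0..T}. dist (x t) p < \<epsilon>)) \<and>
     (\<exists>\<eta>>0. \<forall>x. global_solution f x \<longrightarrow> dist (x 0) p < \<eta> \<longrightarrow>
          (x \<longlongrightarrow> p) at_top)"

end

theory Submission
  imports Defs
begin

text \<open>At both boundary equilibria one population is absent, and in a suitable ordering of the
  coordinates, \<open>(x\<^sub>2, x\<^sub>1, u\<^sub>1, u\<^sub>2)\<close> for the host-only and \<open>(x\<^sub>1, x\<^sub>2, u\<^sub>2, u\<^sub>1)\<close> for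
  the parasite-only equilibrium, the Jacobian is lower triangular; the hypotheses say exactly that
  its diagonal entries are negative. For such a matrix one can choose positive weights row by row,
  each small enough that the coupling to the earlier coordinates is absorbed by AM-GM, so that the
  diagonal quadratic form \<open>\<Sum> w\<^sub>i y\<^sub>i\<^sup>2\<close> strictly decreases along the linearised flow. Since
  the nonlinear remainder is \<open>o(\<parallel>y\<parallel>)\<close>, the same form is a strict Lyapunov function for the
  full system near the equilibrium, which yields Lyapunov stability and exponential attraction.\<close>

section \<open>Lyapunov functions\<close>

lemma has_real_derivative_along_solution:
  fixes x :: "real \<Rightarrow> 'a::real_normed_vector"
  assumes "\<And>y. (V has_derivative G y) (at y)"
    and "(x has_vector_derivative v) (at t within S)"
  shows "((\<lambda>t. V (x t)) has_real_derivative G (x t) v) (at t within S)"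
proof -
  have "(V \<circ> x has_vector_derivative G (x t) v) (at t within S)"
    using assms(2) has_derivative_at_withinI[OF assms(1)] by (rule vector_derivative_diff_chain_within)
  then show ?thesis by (simp add: has_real_derivative_iff_has_vector_derivative o_def)
qed

lemma solution_on_if_global_solution:
  assumes "global_solution f x" "0 \<le> T"
  shows "solution_on f T x"
  unfolding solution_on_def
proof
  fix t assume "t \<in> {0..T}"
  then have "(x has_vector_derivative f (x t)) (at t within {0..})"
    using assms(1) unfolding global_solution_def by auto
  then show "(x has_vector_derivative f (x t)) (at t within {0..T})"
    by (rule has_vector_derivative_within_subset) auto
qed

lemma lyapunov_nonincreasing_along_solution:
  fixes f :: "'a::real_normed_vector \<Rightarrow> 'a" and V :: "'a \<Rightarrow> real"
  assumes Vd: "\<And>y. (V has_derivative G y) (at y)"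
    and dec: "\<And>y. norm (y - p) < r \<Longrightarrow> G y (f y) \<le> 0"
    and sol: "solution_on f T x" and s: "0 \<le> s" "s \<le> T"
    and inside: "\<And>t. 0 \<le> t \<Longrightarrow> t < s \<Longrightarrow> norm (x t - p) < r"
  shows "V (x s) \<le> V (x 0)"
proof -
  have Vx': "((\<lambda>t. V (x t)) has_real_derivative G (x t) (f (x t))) (at t within {0..T})"
    if "t \<in> {0..T}" for t
    using sol that unfolding solution_on_def by (intro has_real_derivative_along_solution[OF Vd]) auto
  show ?thesis
  proof (rule DERIV_nonpos_imp_decreasing_open[OF s(1)])
    fix t assume t: "0 < t" "t < s"
    have "at t within {0..T} = at t" using t s by (intro at_within_Icc_at) auto
    then show "\<exists>y. ((\<lambda>t. V (x t)) has_real_derivative y) (at t) \<and> y \<le> 0"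
      using Vx'[of t] dec[OF inside] t s by auto
  next
    have "continuous_on {0..T} (\<lambda>t. V (x t))"
      using Vx' by (metis continuous_on_eq_continuous_within DERIV_continuous)
    then show "continuous_on {0..s} (\<lambda>t. V (x t))"
      using s by (elim continuous_on_subset) auto
  qed
qed

text \<open>First-exit argument: at the first time the trajectory reaches the sphere of radius
  \<open>\<rho>\<close>, \<open>V\<close> would be at least \<open>\<alpha> \<rho>\<^sup>2\<close>, which exceeds the initial value.\<close>
lemma lyapunov_solution_stays_in_ball:
  fixes f :: "'a::real_normed_vector \<Rightarrow> 'a" and V :: "'a \<Rightarrow> real"
  assumes Vd: "\<And>y. (V has_derivative G y) (at y)"
    and Vlo: "\<And>y. \<alpha> * (norm (y - p))\<^sup>2 \<le> V y"
    and Vhi: "\<And>y. V y \<le> \<beta> * (norm (y - p))\<^sup>2"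
    and \<alpha>: "\<alpha> > 0" and \<rho>: "0 < \<rho>" "\<rho> \<le> r"
    and dec: "\<And>y. norm (y - p) < r \<Longrightarrow> G y (f y) \<le> 0"
    and sol: "solution_on f T x" and T: "0 \<le> T"
    and start: "\<beta> * (norm (x 0 - p))\<^sup>2 < \<alpha> * \<rho>\<^sup>2"
  shows "\<forall>t\<in>{0..T}. norm (x t - p) < \<rho>"
proof (rule ccontr)
  assume "\<not> (\<forall>t\<in>{0..T}. norm (x t - p) < \<rho>)"
  define U where "U = {t \<in> {0..T}. \<rho> \<le> norm (x t - p)}"
  have "U \<noteq> {}" using \<open>\<not> _\<close> unfolding U_def by force
  have "continuous_on {0..T} x"
    using sol unfolding solution_on_def
    by (metis continuous_on_eq_continuous_within has_vector_derivative_continuous)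
  then have "closed U" unfolding U_def
    by (intro continuous_on_closed_Collect_le continuous_intros) auto
  have "bdd_below U" unfolding U_def by (auto intro: bdd_belowI[of _ 0])
  define t1 where "t1 = Inf U"
  have t1U: "t1 \<in> U"
    unfolding t1_def using \<open>U \<noteq> {}\<close> \<open>closed U\<close> \<open>bdd_below U\<close> by (intro closed_contains_Inf)
  have "V (x t1) \<le> V (x 0)"
  proof (rule lyapunov_nonincreasing_along_solution[OF Vd dec sol])
    show "0 \<le> t1" "t1 \<le> T" using t1U unfolding U_def by auto
    fix t assume "0 \<le> t" "t < t1"
    then have "t \<notin> U" using cInf_lower[OF _ \<open>bdd_below U\<close>] unfolding t1_def by force
    then show "norm (x t - p) < r" using \<open>0 \<le> t\<close> \<open>t < t1\<close> t1U \<rho> unfolding U_def by auto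
  qed
  also have "\<dots> \<le> \<beta> * (norm (x 0 - p))\<^sup>2" by (rule Vhi)
  also have "\<dots> < \<alpha> * \<rho>\<^sup>2" by (rule start)
  also have "\<dots> \<le> \<alpha> * (norm (x t1 - p))\<^sup>2"
    using t1U \<rho> \<alpha> unfolding U_def by (auto intro!: mult_left_mono power_mono)
  also have "\<dots> \<le> V (x t1)" by (rule Vlo)
  finally show False by simp
qed

lemma lyapunov_exponential_decay:
  fixes f :: "'a::real_normed_vector \<Rightarrow> 'a" and V :: "'a \<Rightarrow> real"
  assumes Vd: "\<And>y. (V has_derivative G y) (at y)"
    and dec: "\<And>t. 0 \<le> t \<Longrightarrow> G (x t) (f (x t)) \<le> - c * V (x t)"
    and sol: "global_solution f x" and t: "0 \<le> t"
  shows "V (x t) \<le> V (x 0) * exp (- c * t)"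
proof -
  define W where "W s = V (x s) * exp (c * s)" for s
  have W': "(W has_real_derivative (G (x s) (f (x s)) + c * V (x s)) * exp (c * s)) (at s within {0..})"
    if "0 \<le> s" for s
  proof -
    have "((\<lambda>s. V (x s)) has_real_derivative G (x s) (f (x s))) (at s within {0..})"
      using sol that unfolding global_solution_def by (intro has_real_derivative_along_solution[OF Vd]) auto
    then show ?thesis unfolding W_def by (auto intro!: derivative_eq_intros simp: algebra_simps)
  qed
  have "W t \<le> W 0"
  proof (rule DERIV_nonpos_imp_decreasing_open[OF t])
    fix s assume s: "0 < s" "s < t"
    have "at s within {0..} = at s" using s by (intro at_within_interior) auto
    moreover have "(G (x s) (f (x s)) + c * V (x s)) * exp (c * s) \<le> 0"
      using dec[of s] s by (intro mult_nonpos_nonneg) auto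
    ultimately show "\<exists>y. (W has_real_derivative y) (at s) \<and> y \<le> 0"
      using W'[of s] s by auto
  next
    have "continuous_on {0..} W"
      using W' by (metis continuous_on_eq_continuous_within DERIV_continuous atLeast_iff)
    then show "continuous_on {0..t} W" by (elim continuous_on_subset) auto
  qed
  then have "V (x t) * exp (c * t) * exp (- c * t) \<le> V (x 0) * exp (- c * t)"
    by (intro mult_right_mono) (auto simp: W_def)
  then show ?thesis by (simp add: mult.assoc flip: exp_add)
qed

lemma lyapunov_solution_tendsto:
  fixes f :: "'a::real_normed_vector \<Rightarrow> 'a" and V :: "'a \<Rightarrow> real"
  assumes Vd: "\<And>y. (V has_derivative G y) (at y)"
    and Vlo: "\<And>y. \<alpha> * (norm (y - p))\<^sup>2 \<le> V y" and \<alpha>: "\<alpha> > 0" and c: "c > 0"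
    and dec: "\<And>y. norm (y - p) < r \<Longrightarrow> G y (f y) \<le> - c * V y"
    and sol: "global_solution f x" and inside: "\<And>t. 0 \<le> t \<Longrightarrow> norm (x t - p) < r"
  shows "(x \<longlongrightarrow> p) at_top"
proof -
  define b where "b t = sqrt (V (x 0) / \<alpha> * exp (- c * t))" for t
  have "norm (x t - p) \<le> b t" if "0 \<le> t" for t
  proof -
    have "\<alpha> * (norm (x t - p))\<^sup>2 \<le> V (x 0) * exp (- c * t)"
      using Vlo[of "x t"] lyapunov_exponential_decay[OF Vd dec[OF inside] sol that] by linarith
    then have "(norm (x t - p))\<^sup>2 \<le> V (x 0) / \<alpha> * exp (- c * t)"
      using \<alpha> by (simp add: field_simps)
    then show ?thesis unfolding b_def by (simp add: real_le_rsqrt)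
  qed
  then have "\<forall>\<^sub>F t in at_top. norm (x t - p) \<le> b t"
    unfolding eventually_at_top_linorder by blast
  moreover have "LIM t at_top. - c * t :> at_bot"
    using c by (intro filterlim_tendsto_neg_mult_at_bot[OF tendsto_const] filterlim_ident) auto
  then have "((\<lambda>t. exp (- c * t)) \<longlongrightarrow> 0) at_top"
    by (rule filterlim_compose[OF exp_at_bot])
  then have "((\<lambda>t. V (x 0) / \<alpha> * exp (- c * t)) \<longlongrightarrow> 0) at_top"
    by (rule tendsto_mult_right_zero)
  then have "(b \<longlongrightarrow> sqrt 0) at_top"
    unfolding b_def by (rule tendsto_real_sqrt)
  ultimately have "((\<lambda>t. x t - p) \<longlongrightarrow> 0) at_top"
    by (auto intro: Lim_null_comparison)
  then show ?thesis by (simp add: Lim_null[symmetric])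
qed

lemma loc_asymp_stable_if_lyapunov:
  fixes f :: "'a::real_normed_vector \<Rightarrow> 'a" and V :: "'a \<Rightarrow> real"
  assumes fp: "f p = 0"
    and Vd: "\<And>y. (V has_derivative G y) (at y)"
    and Vlo: "\<And>y. \<alpha> * (norm (y - p))\<^sup>2 \<le> V y"
    and Vhi: "\<And>y. V y \<le> \<beta> * (norm (y - p))\<^sup>2"
    and \<alpha>: "\<alpha> > 0" and \<beta>: "\<beta> > 0" and r: "r > 0" and c: "c > 0"
    and dec: "\<And>y. norm (y - p) < r \<Longrightarrow> G y (f y) \<le> - c * V y"
  shows "loc_asymp_stable f p"
proof -
  have V_nonneg: "0 \<le> V y" for y
    using Vlo[of y] \<alpha> by (meson order_trans mult_nonneg_nonneg zero_le_power2 less_imp_le)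
  have dec0: "G y (f y) \<le> 0" if "norm (y - p) < r" for y
  proof -
    have "0 \<le> c * V y" using V_nonneg[of y] c by simp
    then show ?thesis using dec[OF that] by linarith
  qed
  define k where "k = sqrt (\<alpha> / \<beta>)"
  have k: "k > 0" unfolding k_def using \<alpha> \<beta> by simp
  have stays: "\<forall>t\<in>{0..T}. norm (x t - p) < \<rho>"
    if "0 < \<rho>" "\<rho> \<le> r" "solution_on f T x" "0 \<le> T" "dist (x 0) p < k * \<rho>" for \<rho> T x
  proof (rule lyapunov_solution_stays_in_ball[OF Vd Vlo Vhi \<alpha> that(1,2) dec0 that(3,4)])
    have "norm (x 0 - p) < k * \<rho>" using that(5) by (simp add: dist_norm)
    then have "(norm (x 0 - p))\<^sup>2 < (k * \<rho>)\<^sup>2"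
      by (intro power_strict_mono) auto
    also have "\<dots> = \<alpha> / \<beta> * \<rho>\<^sup>2" unfolding k_def using \<alpha> \<beta> by (simp add: power_mult_distrib)
    finally show "\<beta> * (norm (x 0 - p))\<^sup>2 < \<alpha> * \<rho>\<^sup>2" using \<beta> by (simp add: field_simps)
  qed
  have stable: "\<forall>\<epsilon>>0. \<exists>\<delta>>0. \<forall>x T. 0 \<le> T \<longrightarrow> solution_on f T x \<longrightarrow> dist (x 0) p < \<delta> \<longrightarrow>
          (\<forall>t\<in>{0..T}. dist (x t) p < \<epsilon>)"
  proof (intro allI impI)
    fix \<epsilon> :: real assume "\<epsilon> > 0"
    then have \<rho>: "0 < min \<epsilon> r" "min \<epsilon> r \<le> r" using r by auto
    show "\<exists>\<delta>>0. \<forall>x T. 0 \<le> T \<longrightarrow> solution_on f T x \<longrightarrow> dist (x 0) p < \<delta> \<longrightarrow>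
          (\<forall>t\<in>{0..T}. dist (x t) p < \<epsilon>)"
    proof (intro exI[of _ "k * min \<epsilon> r"] conjI allI impI ballI)
      show "0 < k * min \<epsilon> r" using k \<rho> by simp
      fix x T t assume "0 \<le> T" "solution_on f T x" "dist (x 0) p < k * min \<epsilon> r" "t \<in> {0..T}"
      then have "norm (x t - p) < min \<epsilon> r" using stays[OF \<rho>] by blast
      then show "dist (x t) p < \<epsilon>" by (simp add: dist_norm)
    qed
  qed
  have attractive: "\<exists>\<eta>>0. \<forall>x. global_solution f x \<longrightarrow> dist (x 0) p < \<eta> \<longrightarrow> (x \<longlongrightarrow> p) at_top"
  proof (intro exI[of _ "k * r"] conjI allI impI)
    show "0 < k * r" using k r by simp
    fix x assume sol: "global_solution f x" and start: "dist (x 0) p < k * r"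
    have inside: "norm (x t - p) < r" if "0 \<le> t" for t
      using stays[OF r order_refl solution_on_if_global_solution[OF sol that] that start] that by auto
    show "(x \<longlongrightarrow> p) at_top" by (rule lyapunov_solution_tendsto[OF Vd Vlo \<alpha> c dec sol inside])
  qed
  show ?thesis
    unfolding loc_asymp_stable_def is_equilibrium_def using fp stable attractive by blast
qed

text \<open>The quadratic form \<open>\<parallel>S (z - p)\<parallel>\<^sup>2\<close> is a strict Lyapunov function for \<open>D\<close>, and it
  remains one for \<open>f\<close> near \<open>p\<close> because the nonlinear remainder is \<open>o(\<parallel>z - p\<parallel>)\<close>.\<close>
lemma loc_asymp_stable_if_linearization_dissipative:
  fixes f D S :: "'a::real_inner \<Rightarrow> 'a"
  assumes fp: "f p = 0" and fD: "(f has_derivative D) (at p)"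
    and S: "bounded_linear S" and S_lower: "\<And>y. \<alpha> * norm y \<le> norm (S y)" and \<alpha>: "\<alpha> > 0"
    and diss: "\<And>y. S y \<bullet> S (D y) \<le> - c * (norm y)\<^sup>2" and c: "c > 0"
  shows "loc_asymp_stable f p"
proof -
  obtain K where K: "K > 0" and S_upper: "\<And>y. norm (S y) \<le> norm y * K"
    using bounded_linear.pos_bounded[OF S] by blast
  define V where "V z = S (z - p) \<bullet> S (z - p)" for z
  define G where "G z h = 2 * (S (z - p) \<bullet> S h)" for z h
  have V_norm: "V z = (norm (S (z - p)))\<^sup>2" for z
    unfolding V_def by (simp add: power2_norm_eq_inner)
  have Vd: "(V has_derivative G z) (at z)" for z
    unfolding V_def G_def
    by (auto intro!: derivative_eq_intros bounded_linear.has_derivative[OF S]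
        simp: linear_simps[OF S] inner_commute)
  have Vlo: "\<alpha>\<^sup>2 * (norm (z - p))\<^sup>2 \<le> V z" for z
    unfolding V_norm using S_lower[of "z - p"] \<alpha>
    by (metis power_mono power_mult_distrib mult_nonneg_nonneg less_imp_le norm_ge_zero)
  have Vhi: "V z \<le> K\<^sup>2 * (norm (z - p))\<^sup>2" for z
    unfolding V_norm using S_upper[of "z - p"]
    by (metis power_mono power_mult_distrib mult.commute norm_ge_zero)
  define \<epsilon> where "\<epsilon> = c / (2 * K\<^sup>2)"
  have "\<epsilon> > 0" unfolding \<epsilon>_def using c K by simp
  then obtain r where r: "r > 0"
    and remainder: "\<And>y. norm (y - p) < r \<Longrightarrow> norm (f y - D (y - p)) \<le> \<epsilon> * norm (y - p)"
    using fD fp unfolding has_derivative_at_alt by force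
  have dec: "G y (f y) \<le> - (c / K\<^sup>2) * V y" if y: "norm (y - p) < r" for y
  proof -
    define u where "u = y - p"
    define R where "R = f y - D u"
    have "S u \<bullet> S R \<le> norm (S u) * norm (S R)" by (rule norm_cauchy_schwarz)
    also have "\<dots> \<le> (norm u * K) * (norm R * K)"
      using S_upper K by (intro mult_mono) auto
    also have "\<dots> \<le> (norm u * K) * (\<epsilon> * norm u * K)"
      using remainder[OF y] K unfolding R_def u_def by (intro mult_left_mono mult_right_mono) auto
    also have "\<dots> = c / 2 * (norm u)\<^sup>2"
      unfolding \<epsilon>_def using K by (simp add: power2_eq_square field_simps)
    finally have SR: "S u \<bullet> S R \<le> c / 2 * (norm u)\<^sup>2" .
    have "G y (f y) = 2 * (S u \<bullet> S (D u)) + 2 * (S u \<bullet> S R)"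
      unfolding G_def R_def u_def by (simp add: linear_simps[OF S] inner_diff_right)
    also have "\<dots> \<le> - c * (norm u)\<^sup>2"
      using diss[of u] SR by linarith
    also have "\<dots> \<le> - (c / K\<^sup>2) * V y"
      using Vhi[of y] c K unfolding u_def by (simp add: field_simps)
    finally show ?thesis .
  qed
  show ?thesis
    using loc_asymp_stable_if_lyapunov[OF fp Vd Vlo Vhi _ _ r _ dec] \<alpha> K c by simp
qed

section \<open>Lower-triangular linear systems\<close>

text \<open>Adding one row to a dissipative lower-triangular system: the new coordinate gets a
  weight small enough that its coupling term \<open>L\<close> to the old coordinates is absorbed,
  by AM-GM, into half of the old dissipation.\<close>
lemma dissipation_add_row:
  fixes c m B S q L z :: real
  assumes c: "c > 0" and m: "m < 0" and B: "B \<ge> 0" and S: "S \<ge> 0"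
    and q: "q \<le> - c * S" and L: "L\<^sup>2 \<le> B * S"
  shows "q + (c * (- m) / (B + 1)) * z * (L + m * z)
         \<le> - min (c / 2) (c * m\<^sup>2 / (2 * (B + 1))) * (S + z\<^sup>2)"
proof -
  define k where "k = - m"
  define \<beta> where "\<beta> = c / (B + 1)"
  have k: "k > 0" using m unfolding k_def by simp
  have \<beta>: "\<beta> > 0" using c B unfolding \<beta>_def by simp
  have \<beta>B: "\<beta> * B \<le> c"
    unfolding \<beta>_def using c B by (simp add: field_simps)
  have "2 * k * z * L \<le> k\<^sup>2 * z\<^sup>2 + L\<^sup>2"
    using zero_le_power2[of "k * z - L"] by (simp add: power2_eq_square algebra_simps)
  also have "\<dots> \<le> k\<^sup>2 * z\<^sup>2 + B * S" using L by simp
  finally have "\<beta> / 2 * (2 * k * z * L) \<le> \<beta> / 2 * (k\<^sup>2 * z\<^sup>2 + B * S)"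
    using \<beta> by (intro mult_left_mono) auto
  moreover have "\<beta> * B * S \<le> c * S" using \<beta>B S by (rule mult_right_mono)
  ultimately have coupling: "\<beta> * k * z * L \<le> \<beta> * k\<^sup>2 / 2 * z\<^sup>2 + c / 2 * S"
    by (simp add: algebra_simps)
  have "q + \<beta> * k * z * (L + m * z) \<le> - (c / 2) * S - (\<beta> * k\<^sup>2 / 2) * z\<^sup>2"
    using q coupling unfolding k_def by (simp add: power2_eq_square algebra_simps)
  moreover have "- (c / 2) * S - (\<beta> * k\<^sup>2 / 2) * z\<^sup>2 \<le> - min (c / 2) (\<beta> * k\<^sup>2 / 2) * (S + z\<^sup>2)"
  proof -
    have "min (c / 2) (\<beta> * k\<^sup>2 / 2) * S \<le> c / 2 * S"
      "min (c / 2) (\<beta> * k\<^sup>2 / 2) * z\<^sup>2 \<le> \<beta> * k\<^sup>2 / 2 * z\<^sup>2"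
      using S by (intro mult_right_mono; simp)+
    then show ?thesis by (simp add: algebra_simps)
  qed
  ultimately have "q + \<beta> * k * z * (L + m * z) \<le> - min (c / 2) (\<beta> * k\<^sup>2 / 2) * (S + z\<^sup>2)"
    by (rule order_trans)
  moreover have "\<beta> * k = c * (- m) / (B + 1)" "\<beta> * k\<^sup>2 / 2 = c * m\<^sup>2 / (2 * (B + 1))"
    unfolding \<beta>_def k_def by simp_all
  ultimately show ?thesis by simp
qed

lemma lower_triangular_weighted_dissipative:
  fixes M :: "nat \<Rightarrow> nat \<Rightarrow> real"
  assumes "\<And>i. i < n \<Longrightarrow> M i i < 0" and "\<And>i j. i < j \<Longrightarrow> j < n \<Longrightarrow> M i j = 0"
  shows "\<exists>w c. (\<forall>i<n. w i > 0) \<and> c > 0 \<and>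
    (\<forall>z. (\<Sum>i<n. w i * z i * (\<Sum>j<n. M i j * z j)) \<le> - c * (\<Sum>i<n. (z i)\<^sup>2))"
  using assms
proof (induction n)
  case 0
  show ?case by (intro exI[of _ "\<lambda>_. 1"] exI[of _ 1]) simp
next
  case (Suc n)
  then obtain w c where w: "\<forall>i<n. w i > 0" and c: "c > 0"
    and diss: "\<And>z. (\<Sum>i<n. w i * z i * (\<Sum>j<n. M i j * z j)) \<le> - c * (\<Sum>i<n. (z i)\<^sup>2)"
    by force
  define m where "m = M n n"
  define B where "B = (\<Sum>j<n. (M n j)\<^sup>2)"
  define w' where "w' = w(n := c * (- m) / (B + 1))"
  define c' where "c' = min (c / 2) (c * m\<^sup>2 / (2 * (B + 1)))"
  have m: "m < 0" unfolding m_def using Suc.prems(1) by simp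
  have B: "B \<ge> 0" unfolding B_def by (simp add: sum_nonneg)
  have last_column: "M i n = 0" if "i < n" for i using Suc.prems(2) that by simp
  have "(\<Sum>i<Suc n. w' i * z i * (\<Sum>j<Suc n. M i j * z j)) \<le> - c' * (\<Sum>i<Suc n. (z i)\<^sup>2)" for z
  proof -
    have "(\<Sum>i<n. w' i * z i * (\<Sum>j<Suc n. M i j * z j)) = (\<Sum>i<n. w i * z i * (\<Sum>j<n. M i j * z j))"
      by (intro sum.cong) (auto simp: w'_def last_column)
    moreover have "(\<Sum>j<n. M n j * z j)\<^sup>2 \<le> B * (\<Sum>j<n. (z j)\<^sup>2)"
      unfolding B_def by (rule Cauchy_Schwarz_ineq_sum)
    ultimately show ?thesis
      using dissipation_add_row[OF c m B sum_nonneg diss] unfolding c'_def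
      by (simp add: w'_def m_def)
  qed
  moreover have "c * m / (B + 1) < 0" using B by (intro divide_neg_pos mult_pos_neg c m) auto
  then have "\<forall>i<Suc n. w' i > 0" using w by (auto simp: w'_def less_Suc_eq)
  moreover have "c' > 0" unfolding c'_def using c m B by simp
  ultimately show ?case by blast
qed

lemma lower_triangular_4_weighted_dissipative:
  fixes m1 m2 m3 m4 b21 b31 b32 b41 b42 b43 :: real
  assumes "m1 < 0" "m2 < 0" "m3 < 0" "m4 < 0"
  obtains w1 w2 w3 w4 c where "w1 > 0" "w2 > 0" "w3 > 0" "w4 > 0" "c > 0"
    "\<And>z1 z2 z3 z4. w1 * z1 * (m1 * z1) + w2 * z2 * (b21 * z1 + m2 * z2)
       + w3 * z3 * (b31 * z1 + b32 * z2 + m3 * z3)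
       + w4 * z4 * (b41 * z1 + b42 * z2 + b43 * z3 + m4 * z4)
       \<le> - c * (z1\<^sup>2 + z2\<^sup>2 + z3\<^sup>2 + z4\<^sup>2)"
proof -
  define M where "M i j = [[m1, 0, 0, 0], [b21, m2, 0, 0], [b31, b32, m3, 0], [b41, b42, b43, m4]] ! i ! j"
    for i j :: nat
  have "i < 4 \<Longrightarrow> M i i < 0" for i
    using assms by (auto simp: M_def less_Suc_eq numeral_eq_Suc)
  moreover have "i < j \<Longrightarrow> j < 4 \<Longrightarrow> M i j = 0" for i j
    by (auto simp: M_def less_Suc_eq numeral_eq_Suc)
  ultimately obtain w c where "\<forall>i<4. w i > 0" "c > 0"
    and diss: "\<And>z. (\<Sum>i<4. w i * z i * (\<Sum>j<4. M i j * z j)) \<le> - c * (\<Sum>i<4. (z i)\<^sup>2)"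
    using lower_triangular_weighted_dissipative[of 4 M] by blast
  moreover have "w 0 * z1 * (m1 * z1) + w 1 * z2 * (b21 * z1 + m2 * z2)
       + w 2 * z3 * (b31 * z1 + b32 * z2 + m3 * z3)
       + w 3 * z4 * (b41 * z1 + b42 * z2 + b43 * z3 + m4 * z4)
       \<le> - c * (z1\<^sup>2 + z2\<^sup>2 + z3\<^sup>2 + z4\<^sup>2)" for z1 z2 z3 z4
    using diss[of "\<lambda>i. [z1, z2, z3, z4] ! i"]
    by (simp add: M_def numeral_eq_Suc algebra_simps)
  ultimately show ?thesis using that[of "w 0" "w 1" "w 2" "w 3" c] by (simp add: numeral_eq_Suc)
qed

lemma smooth1_differentiable:
  assumes "smooth1 f"
  shows "f differentiable at x" and "deriv f differentiable at x"
proof -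
  have "(deriv ^^ 0) f differentiable at x" "(deriv ^^ 1) f differentiable at x"
    using assms unfolding smooth1_def by blast+
  then show "f differentiable at x" "deriv f differentiable at x" by simp_all
qed

lemma smooth1_has_real_derivative:
  assumes "smooth1 f"
  shows "(f has_real_derivative deriv f x) (at x)"
    and "(deriv f has_real_derivative deriv (deriv f) x) (at x)"
  using smooth1_differentiable[OF assms] by (simp_all add: DERIV_deriv_iff_real_differentiable)

lemma smooth2_differentiable:
  assumes "smooth2 g"
  shows "(\<lambda>(x, y). g x y) differentiable at q"
    and "(\<lambda>(x, y). pd1 g x y) differentiable at q"
    and "(\<lambda>(x, y). pd2 g x y) differentiable at q"
proof -
  have "(\<lambda>(x::real, y::real). iter_pd ds g x y) differentiable (at q)" for ds
    using assms unfolding smooth2_def by blast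
  from this[of "[]"] this[of "[True]"] this[of "[False]"]
  show "(\<lambda>(x, y). g x y) differentiable at q" "(\<lambda>(x, y). pd1 g x y) differentiable at q"
    "(\<lambda>(x, y). pd2 g x y) differentiable at q"
    by (simp_all add: iter_pd_def)
qed

lemma has_real_derivative_pd:
  assumes "(\<lambda>(x, y). g x y) differentiable at (x0, y0)"
  shows "((\<lambda>x. g x y0) has_real_derivative pd1 g x0 y0) (at x0)"
    and "((\<lambda>y. g x0 y) has_real_derivative pd2 g x0 y0) (at y0)"
proof -
  have "(\<lambda>x. (\<lambda>(x, y). g x y) (x, y0)) differentiable at x0"
    by (rule differentiable_compose[of "\<lambda>(x, y). g x y"]) (use assms in \<open>auto intro!: derivative_intros\<close>)
  moreover have "(\<lambda>y. (\<lambda>(x, y). g x y) (x0, y)) differentiable at y0"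
    by (rule differentiable_compose[of "\<lambda>(x, y). g x y"]) (use assms in \<open>auto intro!: derivative_intros\<close>)
  ultimately
  show "((\<lambda>x. g x y0) has_real_derivative pd1 g x0 y0) (at x0)"
    "((\<lambda>y. g x0 y) has_real_derivative pd2 g x0 y0) (at y0)"
    unfolding pd1_def pd2_def by (simp_all add: DERIV_deriv_iff_real_differentiable)
qed

text \<open>The line through \<open>p\<close> is parametrised so that \<open>p\<close> sits at \<open>t\<^sub>0\<close>: moving along a
  coordinate axis, \<open>g\<close> is then a function of that coordinate itself.\<close>
lemma jacobian_entry:
  fixes F D :: "'a::real_normed_vector \<Rightarrow> 'a" and P :: "'a \<Rightarrow> real"
  assumes FD: "(F has_derivative D) (at p)" and P: "bounded_linear P"
    and g: "\<And>t. P (F (p + (t - t0) *\<^sub>R v)) = g t"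
    and g': "(g has_real_derivative w) (at t0)"
  shows "P (D v) = w"
proof -
  have line: "((\<lambda>t. p + (t - t0) *\<^sub>R v) has_derivative (\<lambda>t. t *\<^sub>R v)) (at t0)"
    by (auto intro!: derivative_eq_intros)
  have "((\<lambda>t. P (F (p + (t - t0) *\<^sub>R v))) has_derivative (\<lambda>t. P (D (t *\<^sub>R v)))) (at t0)"
    using has_derivative_compose[OF line, of F D] FD
    by (auto intro: bounded_linear.has_derivative[OF P])
  moreover have "(\<lambda>t. P (D (t *\<^sub>R v))) = (*) (P (D v))"
    using linear_scale[OF has_derivative_linear[OF FD]] linear_scale[OF bounded_linear.linear[OF P]]
    by (simp add: fun_eq_iff mult.commute)
  ultimately have "(g has_real_derivative P (D v)) (at t0)"
    unfolding g by (simp add: has_field_derivative_def)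
  then show ?thesis using g' by (rule DERIV_unique)
qed

lemma jacobian_entry_zero:
  fixes F D :: "'a::real_normed_vector \<Rightarrow> 'a" and P :: "'a \<Rightarrow> real"
  assumes "(F has_derivative D) (at p)" and "bounded_linear P"
    and "\<And>t. P (F (p + (t - t0) *\<^sub>R v)) = 0"
  shows "P (D v) = 0"
  using jacobian_entry[OF assms(1,2), of t0 v "\<lambda>_. 0"] assms(3) DERIV_const by blast

definition x1_of :: "state \<Rightarrow> real" where "x1_of z = fst z"
definition x2_of :: "state \<Rightarrow> real" where "x2_of z = fst (snd z)"
definition u1_of :: "state \<Rightarrow> real" where "u1_of z = fst (snd (snd z))"
definition u2_of :: "state \<Rightarrow> real" where "u2_of z = snd (snd (snd z))"

lemmas state_coord_defs = x1_of_def x2_of_def u1_of_def u2_of_def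

lemma state_coord_simps [simp]:
  "x1_of (a, b, c, d) = a" "x2_of (a, b, c, d) = b" "u1_of (a, b, c, d) = c" "u2_of (a, b, c, d) = d"
  "x1_of (y + z) = x1_of y + x1_of z" "x2_of (y + z) = x2_of y + x2_of z"
  "u1_of (y + z) = u1_of y + u1_of z" "u2_of (y + z) = u2_of y + u2_of z"
  "x1_of (y - z) = x1_of y - x1_of z" "x2_of (y - z) = x2_of y - x2_of z"
  "u1_of (y - z) = u1_of y - u1_of z" "u2_of (y - z) = u2_of y - u2_of z"
  by (simp_all add: state_coord_defs)

lemma bounded_linear_state_coords:
  "bounded_linear x1_of" "bounded_linear x2_of" "bounded_linear u1_of" "bounded_linear u2_of"
  unfolding state_coord_defs
  by (intro bounded_linear_compose[OF bounded_linear_fst] bounded_linear_compose[OF bounded_linear_snd]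
      bounded_linear_fst bounded_linear_snd bounded_linear_ident)+

lemma norm_state_squared:
  "(norm z)\<^sup>2 = (x1_of z)\<^sup>2 + (x2_of z)\<^sup>2 + (u1_of z)\<^sup>2 + (u2_of z)\<^sup>2"
  by (cases z) (simp add: norm_Pair)

lemma linear_state_expansion:
  fixes D :: "state \<Rightarrow> state" and P :: "state \<Rightarrow> real"
  assumes D: "linear D" and P: "bounded_linear P"
  shows "P (D y) = x1_of y * P (D (1, 0, 0, 0)) + x2_of y * P (D (0, 1, 0, 0))
    + u1_of y * P (D (0, 0, 1, 0)) + u2_of y * P (D (0, 0, 0, 1))"
proof -
  have "y = x1_of y *\<^sub>R (1, 0, 0, 0) + x2_of y *\<^sub>R (0, 1, 0, 0) + u1_of y *\<^sub>R (0, 0, 1, 0)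
      + u2_of y *\<^sub>R (0, 0, 0, 1)"
    by (cases y) simp
  then have "P (D y) = P (D (x1_of y *\<^sub>R (1, 0, 0, 0) + x2_of y *\<^sub>R (0, 1, 0, 0)
      + u1_of y *\<^sub>R (0, 0, 1, 0) + u2_of y *\<^sub>R (0, 0, 0, 1)))"
    by (rule arg_cong)
  then show ?thesis
    by (simp only: linear_add[OF D] linear_scale[OF D] linear_add[OF bounded_linear.linear[OF P]]
        linear_scale[OF bounded_linear.linear[OF P]] real_scaleR_def)
qed

text \<open>A diagonal quadratic form \<open>\<Sum> w\<^sub>i y\<^sub>i\<^sup>2\<close> is \<open>\<parallel>S y\<parallel>\<^sup>2\<close> for the scaling \<open>S\<close> by \<open>\<surd>w\<^sub>i\<close>.\<close>
lemma loc_asymp_stable_if_weighted_dissipative: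
  fixes f D :: "state \<Rightarrow> state"
  assumes fp: "f p = 0" and fD: "(f has_derivative D) (at p)"
    and w: "w1 > 0" "w2 > 0" "w3 > 0" "w4 > 0" and c: "c > 0"
    and diss: "\<And>y. w1 * x1_of y * x1_of (D y) + w2 * x2_of y * x2_of (D y)
      + w3 * u1_of y * u1_of (D y) + w4 * u2_of y * u2_of (D y) \<le> - c * (norm y)\<^sup>2"
  shows "loc_asymp_stable f p"
proof -
  define S where "S y = (sqrt w1 * x1_of y, sqrt w2 * x2_of y, sqrt w3 * u1_of y, sqrt w4 * u2_of y)"
    for y
  define \<mu> where "\<mu> = min (min w1 w2) (min w3 w4)"
  have \<mu>: "\<mu> > 0" unfolding \<mu>_def using w by simp
  have "bounded_linear S"
    unfolding S_def
    by (intro bounded_linear_Pair bounded_linear_compose[OF bounded_linear_mult_right]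
        bounded_linear_state_coords)
  moreover have inner_S: "S y \<bullet> S z = w1 * x1_of y * x1_of z + w2 * x2_of y * x2_of z
      + w3 * u1_of y * u1_of z + w4 * u2_of y * u2_of z" for y z
  proof -
    have sq: "(sqrt w * a) * (sqrt w * b) = w * a * b" if "w > 0" for w a b :: real
      using that by (simp add: algebra_simps flip: power2_eq_square)
    show ?thesis
      unfolding S_def inner_Pair inner_real_def sq[OF w(1)] sq[OF w(2)] sq[OF w(3)] sq[OF w(4)]
      by (simp add: add.assoc)
  qed
  moreover have "sqrt \<mu> * norm y \<le> norm (S y)" for y
  proof -
    have "\<mu> * (norm y)\<^sup>2
        = \<mu> * (x1_of y)\<^sup>2 + \<mu> * (x2_of y)\<^sup>2 + \<mu> * (u1_of y)\<^sup>2 + \<mu> * (u2_of y)\<^sup>2"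
      by (simp add: norm_state_squared algebra_simps)
    also have "\<dots> \<le> w1 * (x1_of y)\<^sup>2 + w2 * (x2_of y)\<^sup>2 + w3 * (u1_of y)\<^sup>2 + w4 * (u2_of y)\<^sup>2"
      unfolding \<mu>_def by (intro add_mono mult_right_mono) auto
    also have "\<dots> = (norm (S y))\<^sup>2"
      unfolding power2_norm_eq_inner inner_S by (simp add: power2_eq_square mult.assoc)
    finally have "\<mu> * (norm y)\<^sup>2 \<le> (norm (S y))\<^sup>2" .
    then have "sqrt (\<mu> * (norm y)\<^sup>2) \<le> sqrt ((norm (S y))\<^sup>2)" by (rule real_sqrt_le_mono)
    then show ?thesis using \<mu> by (simp add: real_sqrt_mult)
  qed
  ultimately show ?thesis
    using loc_asymp_stable_if_linearization_dissipative[OF fp fD, of S "sqrt \<mu>" c] \<mu> c diss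
    by simp
qed

section \<open>The host-parasite field at its boundary equilibria\<close>

lemma hp_field_coords:
  "hp_field r1 r2 h e d s1 s2 K1 K2 a = (\<lambda>z.
     (x1_of z * (r1 * (1 - x1_of z / K1 (u1_of z))
        - a (u1_of z) (u2_of z) * x2_of z / (1 + h * a (u1_of z) (u2_of z) * x1_of z)),
      x2_of z * (e * a (u1_of z) (u2_of z) * x1_of z / (1 + h * a (u1_of z) (u2_of z) * x1_of z)
        - d + r2 * (1 - x2_of z / K2 (u2_of z))),
      s1\<^sup>2 * (r1 * x1_of z * deriv K1 (u1_of z) / (K1 (u1_of z))\<^sup>2
        - x2_of z * pd1 a (u1_of z) (u2_of z) / (1 + h * a (u1_of z) (u2_of z) * x1_of z)\<^sup>2),
      s2\<^sup>2 * (e * x1_of z * pd2 a (u1_of z) (u2_of z) / (1 + h * a (u1_of z) (u2_of z) * x1_of z)\<^sup>2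
        + r2 * x2_of z * deriv K2 (u2_of z) / (K2 (u2_of z))\<^sup>2)))"
  by (auto simp: hp_field_def fun_eq_iff state_coord_defs split: prod.splits)

lemma hp_field_differentiable:
  assumes K1: "smooth1 K1" "\<And>u. K1 u > 0" and K2: "smooth1 K2" "\<And>u. K2 u > 0"
    and a: "smooth2 a" and den: "1 + h * a (u1_of q) (u2_of q) * x1_of q \<noteq> 0"
  shows "hp_field r1 r2 h e d s1 s2 K1 K2 a differentiable at q"
proof -
  have coords: "x1_of differentiable at q" "x2_of differentiable at q"
    "u1_of differentiable at q" "u2_of differentiable at q"
    using bounded_linear_state_coords by (auto intro: bounded_linear_imp_differentiable)
  have smooth1_comp: "(\<lambda>z. k (u z)) differentiable at q" "(\<lambda>z. deriv k (u z)) differentiable at q"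
    if "smooth1 k" "u differentiable at q" for k u
    using that by (auto intro: differentiable_compose[of _ u] smooth1_differentiable)
  have smooth2_comp: "(\<lambda>z. g (u1_of z) (u2_of z)) differentiable at q"
    if "(\<lambda>(x, y). g x y) differentiable at (u1_of q, u2_of q)" for g
  proof -
    have "(\<lambda>z. (\<lambda>(x, y). g x y) (u1_of z, u2_of z)) differentiable at q"
      by (rule differentiable_compose[of "\<lambda>(x, y). g x y"])
        (use that coords in \<open>auto intro: differentiable_Pair\<close>)
    then show ?thesis by simp
  qed
  note smooth_comps = smooth1_comp[OF K1(1) coords(3)] smooth1_comp[OF K2(1) coords(4)]
    smooth2_comp[OF smooth2_differentiable(1)[OF a]] smooth2_comp[OF smooth2_differentiable(2)[OF a]]
    smooth2_comp[OF smooth2_differentiable(3)[OF a]]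
  have "K1 (u1_of q) \<noteq> 0" "K2 (u2_of q) \<noteq> 0" using K1(2) K2(2) by (metis less_irrefl)+
  then show ?thesis
    unfolding hp_field_coords
    by (intro differentiable_Pair differentiable_mult differentiable_diff differentiable_add
        differentiable_divide differentiable_power differentiable_const smooth_comps coords den
        power_not_zero)
qed

lemma host_only_equilibrium:
  assumes "deriv K1 u1s = 0" and "pd2 a u1s u2s = 0"
  shows "is_equilibrium (hp_field r1 r2 h e d s1 s2 K1 K2 a) (K1 u1s, 0, u1s, u2s)"
  using assms by (simp add: is_equilibrium_def hp_field_def zero_prod_def)

lemma parasite_only_equilibrium:
  assumes "K2 u2s > 0" and "r2 > 0" and "deriv K2 u2s = 0" and "pd1 a u1s u2s = 0"
  shows "is_equilibrium (hp_field r1 r2 h e d s1 s2 K1 K2 a) (0, K2 u2s * (1 - d / r2), u1s, u2s)"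
proof -
  have "r2 * (1 - K2 u2s * (1 - d / r2) / K2 u2s) = d" using assms(1,2) by (simp add: field_simps)
  then show ?thesis using assms(3,4) by (simp add: is_equilibrium_def hp_field_def zero_prod_def)
qed

lemma host_only_jacobian_population_entries:
  fixes K1 K2 :: "real \<Rightarrow> real" and D :: "state \<Rightarrow> state"
  assumes K1: "smooth1 K1" "\<And>u. K1 u > 0" and K2: "\<And>u. K2 u > 0" and K1'0: "deriv K1 u1s = 0"
    and FD: "(hp_field r1 r2 h e d s1 s2 K1 K2 a has_derivative D) (at (K1 u1s, 0, u1s, u2s))"
  shows "x1_of (D (1, 0, 0, 0)) = - r1" "x1_of (D (0, 0, 1, 0)) = 0" "x1_of (D (0, 0, 0, 1)) = 0"
    and "x2_of (D (1, 0, 0, 0)) = 0" "x2_of (D (0, 0, 1, 0)) = 0" "x2_of (D (0, 0, 0, 1)) = 0"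
    and "x2_of (D (0, 1, 0, 0)) = e * a u1s u2s * K1 u1s / (1 + h * a u1s u2s * K1 u1s) - d + r2"
proof -
  define F where "F = hp_field r1 r2 h e d s1 s2 K1 K2 a"
  define K where "K = K1 u1s"
  define A where "A = a u1s u2s"
  define p where "p = (K, 0::real, u1s, u2s)"
  have K: "K > 0" unfolding K_def using K1(2) by simp
  have FD: "(F has_derivative D) (at p)" using FD unfolding F_def p_def K_def .
  note coords = bounded_linear_state_coords
  show "x1_of (D (1, 0, 0, 0)) = - r1"
  proof (rule jacobian_entry[OF FD coords(1)])
    show "x1_of (F (p + (t - K) *\<^sub>R (1, 0, 0, 0))) = t * (r1 * (1 - t / K))" for t
      by (simp add: F_def p_def hp_field_def K_def)
    show "((\<lambda>t. t * (r1 * (1 - t / K))) has_real_derivative - r1) (at K)"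
      using K by (auto intro!: derivative_eq_intros simp: field_simps)
  qed
  show "x1_of (D (0, 0, 1, 0)) = 0"
  proof (rule jacobian_entry[OF FD coords(1)])
    show "x1_of (F (p + (t - u1s) *\<^sub>R (0, 0, 1, 0))) = K * (r1 * (1 - K / K1 t))" for t
      by (simp add: F_def p_def hp_field_def)
    show "((\<lambda>t. K * (r1 * (1 - K / K1 t))) has_real_derivative 0) (at u1s)"
      using K1(2)[of u1s] by (auto intro!: derivative_eq_intros smooth1_has_real_derivative[OF K1(1)]
          simp: K1'0)
  qed
  show "x1_of (D (0, 0, 0, 1)) = 0"
    by (rule jacobian_entry_zero[OF FD coords(1)]) (simp add: F_def p_def hp_field_def K_def)
  show "x2_of (D (1, 0, 0, 0)) = 0" "x2_of (D (0, 0, 1, 0)) = 0" "x2_of (D (0, 0, 0, 1)) = 0"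
    by (rule jacobian_entry_zero[OF FD coords(2)], simp add: F_def p_def hp_field_def)+
  have "x2_of (D (0, 1, 0, 0)) = e * A * K / (1 + h * A * K) - d + r2"
  proof (rule jacobian_entry[OF FD coords(2)])
    show "x2_of (F (p + (t - 0) *\<^sub>R (0, 1, 0, 0)))
        = t * (e * A * K / (1 + h * A * K) - d + r2 * (1 - t / K2 u2s))" for t
      by (simp add: F_def p_def hp_field_def A_def)
    show "((\<lambda>t. t * (e * A * K / (1 + h * A * K) - d + r2 * (1 - t / K2 u2s)))
        has_real_derivative e * A * K / (1 + h * A * K) - d + r2) (at 0)"
      using K2[of u2s] by (auto intro!: derivative_eq_intros)
  qed
  then show "x2_of (D (0, 1, 0, 0)) = e * a u1s u2s * K1 u1s / (1 + h * a u1s u2s * K1 u1s) - d + r2"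
    unfolding A_def K_def .
qed

lemma host_only_jacobian_trait_entries:
  fixes K1 K2 :: "real \<Rightarrow> real" and a :: "real \<Rightarrow> real \<Rightarrow> real" and D :: "state \<Rightarrow> state"
  assumes K1: "smooth1 K1" "\<And>u. K1 u > 0" and a: "smooth2 a" "\<And>u v. a u v > 0" and h: "h \<ge> 0"
    and K1'0: "deriv K1 u1s = 0" and a_v0: "pd2 a u1s u2s = 0"
    and FD: "(hp_field r1 r2 h e d s1 s2 K1 K2 a has_derivative D) (at (K1 u1s, 0, u1s, u2s))"
  shows "u1_of (D (0, 0, 1, 0)) = s1\<^sup>2 * r1 * deriv (deriv K1) u1s / K1 u1s"
    and "u1_of (D (0, 0, 0, 1)) = 0"
    and "u2_of (D (0, 0, 0, 1))
      = s2\<^sup>2 * e * K1 u1s * pd2 (pd2 a) u1s u2s / (1 + h * a u1s u2s * K1 u1s)\<^sup>2"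
proof -
  define F where "F = hp_field r1 r2 h e d s1 s2 K1 K2 a"
  define K where "K = K1 u1s"
  define A where "A = a u1s u2s"
  define p where "p = (K, 0::real, u1s, u2s)"
  have K: "K > 0" unfolding K_def using K1(2) by simp
  have den: "1 + h * A * K > 0" unfolding A_def using K a(2)[of u1s u2s] h by (simp add: add_pos_nonneg)
  have FD: "(F has_derivative D) (at p)" using FD unfolding F_def p_def K_def .
  note coords = bounded_linear_state_coords
  show "u1_of (D (0, 0, 1, 0)) = s1\<^sup>2 * r1 * deriv (deriv K1) u1s / K1 u1s"
  proof (rule jacobian_entry[OF FD coords(3)])
    show "u1_of (F (p + (t - u1s) *\<^sub>R (0, 0, 1, 0))) = s1\<^sup>2 * (r1 * K * deriv K1 t / (K1 t)\<^sup>2)" for t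
      by (simp add: F_def p_def hp_field_def)
    show "((\<lambda>t. s1\<^sup>2 * (r1 * K * deriv K1 t / (K1 t)\<^sup>2))
        has_real_derivative s1\<^sup>2 * r1 * deriv (deriv K1) u1s / K1 u1s) (at u1s)"
      using K by (auto intro!: derivative_eq_intros smooth1_has_real_derivative[OF K1(1)]
          simp: K1'0 K_def power2_eq_square field_simps)
  qed
  show "u1_of (D (0, 0, 0, 1)) = 0"
    by (rule jacobian_entry_zero[OF FD coords(3)]) (simp add: F_def p_def hp_field_def K_def K1'0)
  have "u2_of (D (0, 0, 0, 1)) = s2\<^sup>2 * e * K * pd2 (pd2 a) u1s u2s / (1 + h * A * K)\<^sup>2"
  proof (rule jacobian_entry[OF FD coords(4)])
    show "u2_of (F (p + (t - u2s) *\<^sub>R (0, 0, 0, 1)))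
        = s2\<^sup>2 * e * K * pd2 a u1s t * inverse ((1 + h * a u1s t * K)\<^sup>2)" for t
      by (simp add: F_def p_def hp_field_def K_def divide_inverse)
    have "((\<lambda>t. s2\<^sup>2 * e * K * pd2 a u1s t * inverse ((1 + h * a u1s t * K)\<^sup>2))
        has_real_derivative s2\<^sup>2 * e * K * pd2 (pd2 a) u1s u2s * inverse ((1 + h * A * K)\<^sup>2)) (at u2s)"
      using den
      by (auto intro!: derivative_eq_intros has_real_derivative_pd(2)[OF smooth2_differentiable(1)[OF a(1)]]
          has_real_derivative_pd(2)[OF smooth2_differentiable(3)[OF a(1)]]
          simp: a_v0 simp flip: A_def)
    then show "((\<lambda>t. s2\<^sup>2 * e * K * pd2 a u1s t * inverse ((1 + h * a u1s t * K)\<^sup>2))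
        has_real_derivative s2\<^sup>2 * e * K * pd2 (pd2 a) u1s u2s / (1 + h * A * K)\<^sup>2) (at u2s)"
      by (simp add: divide_inverse)
  qed
  then show "u2_of (D (0, 0, 0, 1))
      = s2\<^sup>2 * e * K1 u1s * pd2 (pd2 a) u1s u2s / (1 + h * a u1s u2s * K1 u1s)\<^sup>2"
    unfolding A_def K_def .
qed

lemma host_only_jacobian:
  fixes K1 K2 :: "real \<Rightarrow> real" and a :: "real \<Rightarrow> real \<Rightarrow> real" and D :: "state \<Rightarrow> state"
  assumes K1: "smooth1 K1" "\<And>u. K1 u > 0" and K2: "\<And>u. K2 u > 0"
    and a: "smooth2 a" "\<And>u v. a u v > 0" and h: "h \<ge> 0"
    and K1'0: "deriv K1 u1s = 0" and a_v0: "pd2 a u1s u2s = 0"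
    and FD: "(hp_field r1 r2 h e d s1 s2 K1 K2 a has_derivative D) (at (K1 u1s, 0, u1s, u2s))"
  shows "x1_of (D y) = x1_of (D (0, 1, 0, 0)) * x2_of y - r1 * x1_of y"
    and "x2_of (D y) = (e * a u1s u2s * K1 u1s / (1 + h * a u1s u2s * K1 u1s) - d + r2) * x2_of y"
    and "u1_of (D y) = u1_of (D (1, 0, 0, 0)) * x1_of y + u1_of (D (0, 1, 0, 0)) * x2_of y
      + s1\<^sup>2 * r1 * deriv (deriv K1) u1s / K1 u1s * u1_of y"
    and "u2_of (D y) = u2_of (D (1, 0, 0, 0)) * x1_of y + u2_of (D (0, 1, 0, 0)) * x2_of y
      + u2_of (D (0, 0, 1, 0)) * u1_of y
      + s2\<^sup>2 * e * K1 u1s * pd2 (pd2 a) u1s u2s / (1 + h * a u1s u2s * K1 u1s)\<^sup>2 * u2_of y"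
  using linear_state_expansion[OF has_derivative_linear[OF FD] bounded_linear_state_coords(1), of y]
    linear_state_expansion[OF has_derivative_linear[OF FD] bounded_linear_state_coords(2), of y]
    linear_state_expansion[OF has_derivative_linear[OF FD] bounded_linear_state_coords(3), of y]
    linear_state_expansion[OF has_derivative_linear[OF FD] bounded_linear_state_coords(4), of y]
  by (simp_all add: host_only_jacobian_population_entries[OF K1 K2 K1'0 FD]
      host_only_jacobian_trait_entries[OF K1 a h K1'0 a_v0 FD] algebra_simps)

lemma host_only_loc_asymp_stable:
  fixes K1 K2 :: "real \<Rightarrow> real" and a :: "real \<Rightarrow> real \<Rightarrow> real"
  assumes K1: "smooth1 K1" "\<And>u. K1 u > 0" and K2: "smooth1 K2" "\<And>u. K2 u > 0"
    and a: "smooth2 a" "\<And>u v. a u v > 0"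
    and pos: "r1 > 0" "h > 0" "e > 0" "s1 > 0" "s2 > 0"
    and K1'0: "deriv K1 u1s = 0" and a_v0: "pd2 a u1s u2s = 0"
    and no_invasion: "e * a u1s u2s * K1 u1s / (1 + h * a u1s u2s * K1 u1s) < d - r2"
    and K1''_neg: "deriv (deriv K1) u1s < 0" and a_vv_neg: "pd2 (pd2 a) u1s u2s < 0"
  shows "loc_asymp_stable (hp_field r1 r2 h e d s1 s2 K1 K2 a) (K1 u1s, 0, u1s, u2s)"
proof -
  define F where "F = hp_field r1 r2 h e d s1 s2 K1 K2 a"
  define p where "p = (K1 u1s, 0::real, u1s, u2s)"
  have den: "1 + h * a u1s u2s * K1 u1s > 0"
    using pos a(2)[of u1s u2s] K1(2)[of u1s] by (simp add: add_pos_nonneg)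
  have "F differentiable at p"
    unfolding F_def p_def using den by (intro hp_field_differentiable[OF K1 K2 a(1)]) simp
  then obtain D where FD: "(F has_derivative D) (at p)" unfolding differentiable_def by blast
  note J = host_only_jacobian[OF K1 K2(2) a less_imp_le[OF pos(2)] K1'0 a_v0 FD[unfolded F_def p_def]]
  define m2 where "m2 = e * a u1s u2s * K1 u1s / (1 + h * a u1s u2s * K1 u1s) - d + r2"
  define m3 where "m3 = s1\<^sup>2 * r1 * deriv (deriv K1) u1s / K1 u1s"
  define m4 where "m4 = s2\<^sup>2 * e * K1 u1s * pd2 (pd2 a) u1s u2s / (1 + h * a u1s u2s * K1 u1s)\<^sup>2"
  have "m2 < 0" unfolding m2_def using no_invasion by simp
  moreover have "- r1 < 0" using pos by simp
  moreover have "m3 < 0"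
    unfolding m3_def using pos K1''_neg K1(2)[of u1s] by (simp add: mult_pos_neg divide_neg_pos)
  moreover have "m4 < 0"
    unfolding m4_def using pos a_vv_neg K1(2)[of u1s] den
    by (intro divide_neg_pos mult_pos_neg mult_pos_pos) auto
  \<comment> \<open>in the order \<open>(x\<^sub>2, x\<^sub>1, u\<^sub>1, u\<^sub>2)\<close> the Jacobian is lower triangular\<close>
  ultimately obtain w1 w2 w3 w4 c where w: "w1 > 0" "w2 > 0" "w3 > 0" "w4 > 0" "c > 0"
    and diss: "\<And>z1 z2 z3 z4. w1 * z1 * (m2 * z1) + w2 * z2 * (x1_of (D (0, 1, 0, 0)) * z1 + - r1 * z2)
      + w3 * z3 * (u1_of (D (0, 1, 0, 0)) * z1 + u1_of (D (1, 0, 0, 0)) * z2 + m3 * z3)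
      + w4 * z4 * (u2_of (D (0, 1, 0, 0)) * z1 + u2_of (D (1, 0, 0, 0)) * z2
        + u2_of (D (0, 0, 1, 0)) * z3 + m4 * z4)
      \<le> - c * (z1\<^sup>2 + z2\<^sup>2 + z3\<^sup>2 + z4\<^sup>2)"
    using lower_triangular_4_weighted_dissipative[of m2 "- r1" m3 m4 "x1_of (D (0, 1, 0, 0))"
        "u1_of (D (0, 1, 0, 0))" "u1_of (D (1, 0, 0, 0))"
        "u2_of (D (0, 1, 0, 0))" "u2_of (D (1, 0, 0, 0))" "u2_of (D (0, 0, 1, 0))"]
    by blast
  have rows: "x2_of (D y) = m2 * x2_of y"
    "x1_of (D y) = x1_of (D (0, 1, 0, 0)) * x2_of y + - r1 * x1_of y"
    "u1_of (D y) = u1_of (D (0, 1, 0, 0)) * x2_of y + u1_of (D (1, 0, 0, 0)) * x1_of y + m3 * u1_of y"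
    "u2_of (D y) = u2_of (D (0, 1, 0, 0)) * x2_of y + u2_of (D (1, 0, 0, 0)) * x1_of y
      + u2_of (D (0, 0, 1, 0)) * u1_of y + m4 * u2_of y" for y
    using J[of y] unfolding m2_def m3_def m4_def by simp_all
  have weighted: "w2 * x1_of y * x1_of (D y) + w1 * x2_of y * x2_of (D y)
      + w3 * u1_of y * u1_of (D y) + w4 * u2_of y * u2_of (D y) \<le> - c * (norm y)\<^sup>2" for y
    using diss[of "x2_of y" "x1_of y" "u1_of y" "u2_of y"]
    unfolding rows[of y] norm_state_squared by (simp add: algebra_simps)
  have "F p = 0"
    using host_only_equilibrium[OF K1'0 a_v0] unfolding F_def p_def is_equilibrium_def .
  from loc_asymp_stable_if_weighted_dissipative[OF this FD w(2,1,3,4,5) weighted]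
  show ?thesis unfolding F_def p_def .
qed

lemma parasite_only_jacobian_population_entries:
  fixes K1 K2 :: "real \<Rightarrow> real" and D :: "state \<Rightarrow> state"
  assumes K1: "\<And>u. K1 u > 0" and K2: "smooth1 K2" "\<And>u. K2 u > 0" and r2: "r2 > 0"
    and K2'0: "deriv K2 u2s = 0"
    and FD: "(hp_field r1 r2 h e d s1 s2 K1 K2 a has_derivative D)
      (at (0, K2 u2s * (1 - d / r2), u1s, u2s))"
  shows "x1_of (D (1, 0, 0, 0)) = r1 - a u1s u2s * K2 u2s * (1 - d / r2)"
    and "x1_of (D (0, 1, 0, 0)) = 0" "x1_of (D (0, 0, 1, 0)) = 0" "x1_of (D (0, 0, 0, 1)) = 0"
    and "x2_of (D (0, 1, 0, 0)) = d - r2" "x2_of (D (0, 0, 1, 0)) = 0" "x2_of (D (0, 0, 0, 1)) = 0"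
proof -
  define F where "F = hp_field r1 r2 h e d s1 s2 K1 K2 a"
  define X where "X = K2 u2s * (1 - d / r2)"
  define p where "p = (0::real, X, u1s, u2s)"
  have K2u: "K2 u2s > 0" using K2(2) by simp
  have logistic: "r2 * (1 - X / K2 u2s) = d" unfolding X_def using K2u r2 by (simp add: field_simps)
  have FD: "(F has_derivative D) (at p)" using FD unfolding F_def p_def X_def .
  note coords = bounded_linear_state_coords
  have "x1_of (D (1, 0, 0, 0)) = r1 - a u1s u2s * X"
  proof (rule jacobian_entry[OF FD coords(1)])
    show "x1_of (F (p + (t - 0) *\<^sub>R (1, 0, 0, 0)))
        = t * (r1 * (1 - t / K1 u1s) - a u1s u2s * X / (1 + h * a u1s u2s * t))" for t
      by (simp add: F_def p_def hp_field_def)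
    show "((\<lambda>t. t * (r1 * (1 - t / K1 u1s) - a u1s u2s * X / (1 + h * a u1s u2s * t)))
        has_real_derivative r1 - a u1s u2s * X) (at 0)"
      using K1[of u1s] by (auto intro!: derivative_eq_intros)
  qed
  then show "x1_of (D (1, 0, 0, 0)) = r1 - a u1s u2s * K2 u2s * (1 - d / r2)"
    unfolding X_def by (simp add: mult.assoc)
  show "x1_of (D (0, 1, 0, 0)) = 0" "x1_of (D (0, 0, 1, 0)) = 0" "x1_of (D (0, 0, 0, 1)) = 0"
    by (rule jacobian_entry_zero[OF FD coords(1)], simp add: F_def p_def hp_field_def)+
  show "x2_of (D (0, 1, 0, 0)) = d - r2"
  proof (rule jacobian_entry[OF FD coords(2)])
    show "x2_of (F (p + (t - X) *\<^sub>R (0, 1, 0, 0))) = t * (- d + r2 * (1 - t / K2 u2s))" for t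
      by (simp add: F_def p_def hp_field_def)
    have "((\<lambda>t. t * (- d + r2 * (1 - t / K2 u2s))) has_real_derivative
        - d + r2 * (1 - X / K2 u2s) - X * (r2 / K2 u2s)) (at X)"
      using K2u by (auto intro!: derivative_eq_intros simp: field_simps)
    moreover have "X * (r2 / K2 u2s) = r2 - d" unfolding X_def using K2u r2 by (simp add: field_simps)
    ultimately show "((\<lambda>t. t * (- d + r2 * (1 - t / K2 u2s))) has_real_derivative d - r2) (at X)"
      using logistic by simp
  qed
  show "x2_of (D (0, 0, 1, 0)) = 0"
    by (rule jacobian_entry_zero[OF FD coords(2)]) (simp add: F_def p_def hp_field_def logistic)
  show "x2_of (D (0, 0, 0, 1)) = 0"
  proof (rule jacobian_entry[OF FD coords(2)])
    show "x2_of (F (p + (t - u2s) *\<^sub>R (0, 0, 0, 1))) = X * (- d + r2 * (1 - X / K2 t))" for t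
      by (simp add: F_def p_def hp_field_def)
    show "((\<lambda>t. X * (- d + r2 * (1 - X / K2 t))) has_real_derivative 0) (at u2s)"
      using K2u by (auto intro!: derivative_eq_intros smooth1_has_real_derivative[OF K2(1)] simp: K2'0)
  qed
qed

lemma parasite_only_jacobian_trait_entries:
  fixes K1 K2 :: "real \<Rightarrow> real" and a :: "real \<Rightarrow> real \<Rightarrow> real" and D :: "state \<Rightarrow> state"
  assumes K2: "smooth1 K2" "\<And>u. K2 u > 0" and a: "smooth2 a" and r2: "r2 > 0"
    and K2'0: "deriv K2 u2s = 0"
    and FD: "(hp_field r1 r2 h e d s1 s2 K1 K2 a has_derivative D)
      (at (0, K2 u2s * (1 - d / r2), u1s, u2s))"
  shows "u1_of (D (0, 0, 1, 0)) = - (s1\<^sup>2 * K2 u2s * (1 - d / r2) * pd1 (pd1 a) u1s u2s)"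
    and "u2_of (D (0, 0, 1, 0)) = 0"
    and "u2_of (D (0, 0, 0, 1)) = s2\<^sup>2 * (r2 - d) * deriv (deriv K2) u2s / K2 u2s"
proof -
  define F where "F = hp_field r1 r2 h e d s1 s2 K1 K2 a"
  define X where "X = K2 u2s * (1 - d / r2)"
  define p where "p = (0::real, X, u1s, u2s)"
  have K2u: "K2 u2s > 0" using K2(2) by simp
  have FD: "(F has_derivative D) (at p)" using FD unfolding F_def p_def X_def .
  note coords = bounded_linear_state_coords
  have "u1_of (D (0, 0, 1, 0)) = - (s1\<^sup>2 * X * pd1 (pd1 a) u1s u2s)"
  proof (rule jacobian_entry[OF FD coords(3)])
    show "u1_of (F (p + (t - u1s) *\<^sub>R (0, 0, 1, 0))) = - (s1\<^sup>2 * (X * pd1 a t u2s))" for t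
      by (simp add: F_def p_def hp_field_def)
    show "((\<lambda>t. - (s1\<^sup>2 * (X * pd1 a t u2s))) has_real_derivative - (s1\<^sup>2 * X * pd1 (pd1 a) u1s u2s))
        (at u1s)"
      by (auto intro!: derivative_eq_intros has_real_derivative_pd(1)[OF smooth2_differentiable(2)[OF a]])
  qed
  then show "u1_of (D (0, 0, 1, 0)) = - (s1\<^sup>2 * K2 u2s * (1 - d / r2) * pd1 (pd1 a) u1s u2s)"
    unfolding X_def by (simp add: mult.assoc)
  show "u2_of (D (0, 0, 1, 0)) = 0"
    by (rule jacobian_entry_zero[OF FD coords(4)]) (simp add: F_def p_def hp_field_def K2'0)
  show "u2_of (D (0, 0, 0, 1)) = s2\<^sup>2 * (r2 - d) * deriv (deriv K2) u2s / K2 u2s"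
  proof (rule jacobian_entry[OF FD coords(4)])
    show "u2_of (F (p + (t - u2s) *\<^sub>R (0, 0, 0, 1))) = s2\<^sup>2 * (r2 * X * deriv K2 t / (K2 t)\<^sup>2)" for t
      by (simp add: F_def p_def hp_field_def)
    have "((\<lambda>t. s2\<^sup>2 * (r2 * X * deriv K2 t / (K2 t)\<^sup>2)) has_real_derivative
        s2\<^sup>2 * (X * (r2 / K2 u2s)) * deriv (deriv K2) u2s / K2 u2s) (at u2s)"
      using K2u by (auto intro!: derivative_eq_intros smooth1_has_real_derivative[OF K2(1)]
          simp: K2'0 power2_eq_square field_simps)
    moreover have "X * (r2 / K2 u2s) = r2 - d" unfolding X_def using K2u r2 by (simp add: field_simps)
    ultimately show "((\<lambda>t. s2\<^sup>2 * (r2 * X * deriv K2 t / (K2 t)\<^sup>2)) has_real_derivative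
        s2\<^sup>2 * (r2 - d) * deriv (deriv K2) u2s / K2 u2s) (at u2s)"
      by (simp only:)
  qed
qed

lemma parasite_only_jacobian:
  fixes K1 K2 :: "real \<Rightarrow> real" and a :: "real \<Rightarrow> real \<Rightarrow> real" and D :: "state \<Rightarrow> state"
  assumes K1: "\<And>u. K1 u > 0" and K2: "smooth1 K2" "\<And>u. K2 u > 0"
    and a: "smooth2 a" and r2: "r2 > 0" and K2'0: "deriv K2 u2s = 0"
    and FD: "(hp_field r1 r2 h e d s1 s2 K1 K2 a has_derivative D)
      (at (0, K2 u2s * (1 - d / r2), u1s, u2s))"
  shows "x1_of (D y) = (r1 - a u1s u2s * K2 u2s * (1 - d / r2)) * x1_of y"
    and "x2_of (D y) = x2_of (D (1, 0, 0, 0)) * x1_of y + (d - r2) * x2_of y"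
    and "u2_of (D y) = u2_of (D (1, 0, 0, 0)) * x1_of y + u2_of (D (0, 1, 0, 0)) * x2_of y
      + s2\<^sup>2 * (r2 - d) * deriv (deriv K2) u2s / K2 u2s * u2_of y"
    and "u1_of (D y) = u1_of (D (1, 0, 0, 0)) * x1_of y + u1_of (D (0, 1, 0, 0)) * x2_of y
      + u1_of (D (0, 0, 0, 1)) * u2_of y
      - s1\<^sup>2 * K2 u2s * (1 - d / r2) * pd1 (pd1 a) u1s u2s * u1_of y"
  using linear_state_expansion[OF has_derivative_linear[OF FD] bounded_linear_state_coords(1), of y]
    linear_state_expansion[OF has_derivative_linear[OF FD] bounded_linear_state_coords(2), of y]
    linear_state_expansion[OF has_derivative_linear[OF FD] bounded_linear_state_coords(4), of y]
    linear_state_expansion[OF has_derivative_linear[OF FD] bounded_linear_state_coords(3), of y]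
  by (simp_all add: parasite_only_jacobian_population_entries[OF K1 K2 r2 K2'0 FD]
      parasite_only_jacobian_trait_entries[OF K2 a r2 K2'0 FD] algebra_simps)

lemma parasite_only_loc_asymp_stable:
  fixes K1 K2 :: "real \<Rightarrow> real" and a :: "real \<Rightarrow> real \<Rightarrow> real"
  assumes K1: "smooth1 K1" "\<And>u. K1 u > 0" and K2: "smooth1 K2" "\<And>u. K2 u > 0"
    and a: "smooth2 a" "\<And>u v. a u v > 0"
    and pos: "r2 > 0" "s1 > 0" "s2 > 0" and d_lt: "d < r2"
    and K2'0: "deriv K2 u2s = 0" and a_u0: "pd1 a u1s u2s = 0"
    and host_cannot_grow: "r1 / a u1s u2s < K2 u2s * (1 - d / r2)"
    and a_uu_pos: "pd1 (pd1 a) u1s u2s > 0" and K2''_neg: "deriv (deriv K2) u2s < 0"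
  shows "loc_asymp_stable (hp_field r1 r2 h e d s1 s2 K1 K2 a) (0, K2 u2s * (1 - d / r2), u1s, u2s)"
proof -
  define F where "F = hp_field r1 r2 h e d s1 s2 K1 K2 a"
  define X where "X = K2 u2s * (1 - d / r2)"
  define p where "p = (0::real, X, u1s, u2s)"
  have X: "X > 0" unfolding X_def using K2(2)[of u2s] d_lt pos by (simp add: field_simps)
  have "F differentiable at p"
    unfolding F_def p_def by (intro hp_field_differentiable[OF K1 K2 a(1)]) simp
  then obtain D where FD: "(F has_derivative D) (at p)" unfolding differentiable_def by blast
  note J = parasite_only_jacobian[OF K1(2) K2 a(1) pos(1) K2'0 FD[unfolded F_def p_def X_def]]
  define m1 where "m1 = r1 - a u1s u2s * X"
  define m3 where "m3 = s2\<^sup>2 * (r2 - d) * deriv (deriv K2) u2s / K2 u2s"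
  define m4 where "m4 = - (s1\<^sup>2 * X * pd1 (pd1 a) u1s u2s)"
  have "m1 < 0"
    unfolding m1_def X_def using host_cannot_grow a(2)[of u1s u2s] by (simp add: divide_less_eq mult.commute)
  moreover have "d - r2 < 0" using d_lt by simp
  moreover have "m3 < 0"
    unfolding m3_def using pos d_lt K2''_neg K2(2)[of u2s] by (simp add: mult_pos_neg divide_neg_pos)
  moreover have "m4 < 0" unfolding m4_def using pos X a_uu_pos by simp
  \<comment> \<open>in the order \<open>(x\<^sub>1, x\<^sub>2, u\<^sub>2, u\<^sub>1)\<close> the Jacobian is lower triangular\<close>
  ultimately obtain w1 w2 w3 w4 c where w: "w1 > 0" "w2 > 0" "w3 > 0" "w4 > 0" "c > 0"
    and diss: "\<And>z1 z2 z3 z4. w1 * z1 * (m1 * z1) + w2 * z2 * (x2_of (D (1, 0, 0, 0)) * z1 + (d - r2) * z2)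
      + w3 * z3 * (u2_of (D (1, 0, 0, 0)) * z1 + u2_of (D (0, 1, 0, 0)) * z2 + m3 * z3)
      + w4 * z4 * (u1_of (D (1, 0, 0, 0)) * z1 + u1_of (D (0, 1, 0, 0)) * z2
        + u1_of (D (0, 0, 0, 1)) * z3 + m4 * z4)
      \<le> - c * (z1\<^sup>2 + z2\<^sup>2 + z3\<^sup>2 + z4\<^sup>2)"
    using lower_triangular_4_weighted_dissipative[of m1 "d - r2" m3 m4 "x2_of (D (1, 0, 0, 0))"
        "u2_of (D (1, 0, 0, 0))" "u2_of (D (0, 1, 0, 0))"
        "u1_of (D (1, 0, 0, 0))" "u1_of (D (0, 1, 0, 0))" "u1_of (D (0, 0, 0, 1))"]
    by blast
  have rows: "x1_of (D y) = m1 * x1_of y"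
    "x2_of (D y) = x2_of (D (1, 0, 0, 0)) * x1_of y + (d - r2) * x2_of y"
    "u2_of (D y) = u2_of (D (1, 0, 0, 0)) * x1_of y + u2_of (D (0, 1, 0, 0)) * x2_of y + m3 * u2_of y"
    "u1_of (D y) = u1_of (D (1, 0, 0, 0)) * x1_of y + u1_of (D (0, 1, 0, 0)) * x2_of y
      + u1_of (D (0, 0, 0, 1)) * u2_of y + m4 * u1_of y" for y
    using J[of y] unfolding m1_def m3_def m4_def X_def by simp_all
  have weighted: "w1 * x1_of y * x1_of (D y) + w2 * x2_of y * x2_of (D y)
      + w4 * u1_of y * u1_of (D y) + w3 * u2_of y * u2_of (D y) \<le> - c * (norm y)\<^sup>2" for y
    using diss[of "x1_of y" "x2_of y" "u2_of y" "u1_of y"]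
    unfolding rows[of y] norm_state_squared by (simp add: algebra_simps)
  have "F p = 0"
    using parasite_only_equilibrium[OF K2(2) pos(1) K2'0 a_u0]
    unfolding F_def p_def X_def is_equilibrium_def .
  from loc_asymp_stable_if_weighted_dissipative[OF this FD w(1,2,4,3,5) weighted]
  show ?thesis unfolding F_def p_def X_def .
qed

theorem corollary1:
  fixes K1 K2 :: "real \<Rightarrow> real" and a :: "real \<Rightarrow> real \<Rightarrow> real"
    and r1 r2 h e d s1 s2 u1s u2s :: real
  assumes K1_pos: "\<And>u. K1 u > 0" and K2_pos: "\<And>u. K2 u > 0"
    and a_pos: "\<And>u v. a u v > 0"
    and K1_bdd: "bdd_above (range K1)" and K2_bdd: "bdd_above (range K2)"
    and a_bdd: "bdd_above (range (\<lambda>(u, v). a u v))"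
    and K1_smooth: "smooth1 K1" and K2_smooth: "smooth1 K2" and a_smooth: "smooth2 a"
    and d_nonneg: "d \<ge> 0"
    and pos: "r1 > 0" "r2 > 0" "h > 0" "e > 0" "s1 > 0" "s2 > 0"
  shows
    "(deriv K1 u1s = 0 \<and> pd2 a u1s u2s = 0 \<longrightarrow>
        is_equilibrium (hp_field r1 r2 h e d s1 s2 K1 K2 a) (K1 u1s, 0, u1s, u2s) \<and>
        (0 < e * a u1s u2s * K1 u1s / (1 + h * a u1s u2s * K1 u1s) \<and>
         e * a u1s u2s * K1 u1s / (1 + h * a u1s u2s * K1 u1s) < d - r2 \<and>
         deriv (deriv K1) u1s < 0 \<and> pd2 (pd2 a) u1s u2s < 0 \<longrightarrow>
           loc_asymp_stable (hp_field r1 r2 h e d s1 s2 K1 K2 a) (K1 u1s, 0, u1s, u2s)))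
     \<and>
     (d < r2 \<and> deriv K2 u2s = 0 \<and> pd1 a u1s u2s = 0 \<longrightarrow>
        is_equilibrium (hp_field r1 r2 h e d s1 s2 K1 K2 a) (0, K2 u2s * (1 - d / r2), u1s, u2s) \<and>
        (r1 / a u1s u2s < K2 u2s * (1 - d / r2) \<and>
         pd1 (pd1 a) u1s u2s > 0 \<and> deriv (deriv K2) u2s < 0 \<longrightarrow>
           loc_asymp_stable (hp_field r1 r2 h e d s1 s2 K1 K2 a) (0, K2 u2s * (1 - d / r2), u1s, u2s)))"
proof (intro conjI impI)
  assume "deriv K1 u1s = 0 \<and> pd2 a u1s u2s = 0"
  then show "is_equilibrium (hp_field r1 r2 h e d s1 s2 K1 K2 a) (K1 u1s, 0, u1s, u2s)"
    by (intro host_only_equilibrium) auto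
  assume "0 < e * a u1s u2s * K1 u1s / (1 + h * a u1s u2s * K1 u1s) \<and>
    e * a u1s u2s * K1 u1s / (1 + h * a u1s u2s * K1 u1s) < d - r2 \<and>
    deriv (deriv K1) u1s < 0 \<and> pd2 (pd2 a) u1s u2s < 0"
  with \<open>deriv K1 u1s = 0 \<and> pd2 a u1s u2s = 0\<close>
  show "loc_asymp_stable (hp_field r1 r2 h e d s1 s2 K1 K2 a) (K1 u1s, 0, u1s, u2s)"
    by (intro host_only_loc_asymp_stable[OF K1_smooth K1_pos K2_smooth K2_pos a_smooth a_pos])
      (use pos in auto)
next
  assume parasite_only: "d < r2 \<and> deriv K2 u2s = 0 \<and> pd1 a u1s u2s = 0"
  then show "is_equilibrium (hp_field r1 r2 h e d s1 s2 K1 K2 a) (0, K2 u2s * (1 - d / r2), u1s, u2s)"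
    using K2_pos pos by (intro parasite_only_equilibrium) auto
  assume "r1 / a u1s u2s < K2 u2s * (1 - d / r2) \<and>
    pd1 (pd1 a) u1s u2s > 0 \<and> deriv (deriv K2) u2s < 0"
  with parasite_only
  show "loc_asymp_stable (hp_field r1 r2 h e d s1 s2 K1 K2 a) (0, K2 u2s * (1 - d / r2), u1s, u2s)"
    by (intro parasite_only_loc_asymp_stable[OF K1_smooth K1_pos K2_smooth K2_pos a_smooth a_pos])
      (use pos in auto)
qed

end
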